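(* The matrix $$U_7=S_1\otimes S_2\otimes S_0+S_2\otimes S_3\otimes S_0+S_0\otimes S_0\otimes S_1+S_3\otimes S_1\otimes S_1+S_1\otimes S_1\otimes S_2+S_2\otimes S_0\otimes S_2+S_0\otimes S_3\otimes S_3+S_3\otimes S_2\otimes S_3$$ on $\mathbb{C}^2\otimes\mathbb{C}^2\otimes\mathbb{C}^2$ is unitary and $\mathrm{sr}(U_7)=7$.
   Context: $S_0=\begin{bmatrix}1&0\\0&0\end{bmatrix}$, $S_1=\begin{bmatrix}0&1\\0&0\end{bmatrix}$, $S_2=\begin{bmatrix}0&0\\1&0\end{bmatrix}$, $S_3=\begin{bmatrix}0&0\\0&1\end{bmatrix}$. For a matrix $U$ on $\mathbb{C}^2\otimes\mathbb{C}^2\otimes\mathbb{C}^2$ (systems $A,B,C$), its Schmidt rank $\mathrm{sr}(U)$ is the least integer $r$ such that $U=\sum_{j=1}^r A_j\otimes B_j\otimes C_j$ with $A_j,B_j,C_j$ complex $2\times 2$ matrices (i.e. the tensor rank of $U$). *)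

theory Defs
  imports "Jordan_Normal_Form.Matrix"
begin

definition kron :: "'a::times mat \<Rightarrow> 'a mat \<Rightarrow> 'a mat" where
  "kron A B = mat (dim_row A * dim_row B) (dim_col A * dim_col B)
     (\<lambda>(i, j). A $$ (i div dim_row B, j div dim_col B) * B $$ (i mod dim_row B, j mod dim_col B))"

definition kron3 :: "'a::times mat \<Rightarrow> 'a mat \<Rightarrow> 'a mat \<Rightarrow> 'a mat" where
  "kron3 A B C = kron (kron A B) C"

definition adj :: "complex mat \<Rightarrow> complex mat" where
  "adj U = mat (dim_col U) (dim_row U) (\<lambda>(i, j). cnj (U $$ (j, i)))"

definition unitary_mat :: "complex mat \<Rightarrow> bool" where
  "unitary_mat U \<longleftrightarrow> square_mat U \<and> U * adj U = 1\<^sub>m (dim_row U) \<and> adj U * U = 1\<^sub>m (dim_row U)"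

definition S0 :: "complex mat" where "S0 = mat_of_rows_list 2 [[1, 0], [0, 0]]"
definition S1 :: "complex mat" where "S1 = mat_of_rows_list 2 [[0, 1], [0, 0]]"
definition S2 :: "complex mat" where "S2 = mat_of_rows_list 2 [[0, 0], [1, 0]]"
definition S3 :: "complex mat" where "S3 = mat_of_rows_list 2 [[0, 0], [0, 1]]"

definition msum :: "nat \<Rightarrow> nat \<Rightarrow> (nat \<Rightarrow> complex mat) \<Rightarrow> nat \<Rightarrow> complex mat" where
  "msum n m F r = foldr (\<lambda>j acc. F j + acc) [0..<r] (0\<^sub>m n m)"

definition is_sr_decomp :: "complex mat \<Rightarrow> nat \<Rightarrow> bool" where
  "is_sr_decomp U r \<longleftrightarrow> (\<exists>A B C :: nat \<Rightarrow> complex mat.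
     (\<forall>j<r. A j \<in> carrier_mat 2 2 \<and> B j \<in> carrier_mat 2 2 \<and> C j \<in> carrier_mat 2 2) \<and>
     U = msum 8 8 (\<lambda>j. kron3 (A j) (B j) (C j)) r)"

definition schmidt_rank :: "complex mat \<Rightarrow> nat" where
  "schmidt_rank U = (LEAST r. is_sr_decomp U r)"

definition U7 :: "complex mat" where
  "U7 = kron3 S1 S2 S0 + kron3 S2 S3 S0 + kron3 S0 S0 S1 + kron3 S3 S1 S1
      + kron3 S1 S1 S2 + kron3 S2 S0 S2 + kron3 S0 S3 S3 + kron3 S3 S2 S3"

end

theory Submission
  imports Defs "Jordan_Normal_Form.Determinant"
begin

text \<open>
  \<open>U\<^sub>7\<close> permutes the computational basis, so it is unitary, and an explicit sum of seven
  product operators shows \<open>sr(U\<^sub>7) \<le> 7\<close>.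

  For the lower bound, expand every \<open>2 \<times> 2\<close> matrix in the basis \<open>S\<^sub>0, \<dots>, S\<^sub>3\<close>, so that
  \<open>U\<^sub>7\<close> becomes a tensor \<open>T \<in> \<complex>\<^sup>4 \<otimes> \<complex>\<^sup>4 \<otimes> \<complex>\<^sup>4\<close>, and suppose \<open>T = \<Sum>\<^sub>\<rho><6 a\<^sub>\<rho> \<otimes> b\<^sub>\<rho> \<otimes> c\<^sub>\<rho>\<close>.
  Contracting \<open>T\<close> with \<open>x\<close> in the third and \<open>y\<close> in the second slot is linear in \<open>y\<close> with
  determinant \<open>-q(x)\<^sup>2\<close>, where \<open>q(x) = x\<^sub>0x\<^sub>1 - x\<^sub>2x\<^sub>3\<close> is a nondegenerate quadratic form.
  If \<open>x\<close> is annihilated by three of the \<open>c\<^sub>\<rho>\<close>, choosing \<open>y\<close> orthogonal to the other three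
  \<open>b\<^sub>\<rho>\<close> kills that contraction, so \<open>q(x) = 0\<close>; together with the analogous contraction
  against the first slot this shows that the common kernel of any three \<open>c\<^sub>\<rho>\<close> is at most a
  line, that of any five is zero, and that of any two is at most a plane.  A plane
  containing three distinct isotropic lines is totally isotropic, while \<open>q\<close> has no totally
  isotropic subspace of dimension three; a case analysis over the six indices then shows
  that no such decomposition exists.
\<close>

datatype idx4 = I0 | I1 | I2 | I3

lemma all_idx4: "(\<forall>t. P t) \<longleftrightarrow> P I0 \<and> P I1 \<and> P I2 \<and> P I3"
  by (metis idx4.exhaust)

definition sum4 :: "(idx4 \<Rightarrow> complex) \<Rightarrow> complex" where
  "sum4 f = f I0 + f I1 + f I2 + f I3"

definition dot :: "(idx4 \<Rightarrow> complex) \<Rightarrow> (idx4 \<Rightarrow> complex) \<Rightarrow> complex" where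
  "dot v w = sum4 (\<lambda>t. v t * w t)"

definition nonzero :: "(idx4 \<Rightarrow> complex) \<Rightarrow> bool" where
  "nonzero x \<longleftrightarrow> (\<exists>t. x t \<noteq> 0)"

lemma ex_idx4: "(\<exists>t. P t) \<longleftrightarrow> P I0 \<or> P I1 \<or> P I2 \<or> P I3"
  by (metis idx4.exhaust)

lemma nonzero_iff: "nonzero x \<longleftrightarrow> x I0 \<noteq> 0 \<or> x I1 \<noteq> 0 \<or> x I2 \<noteq> 0 \<or> x I3 \<noteq> 0"
  unfolding nonzero_def ex_idx4 ..

lemma sum4_sum: "sum4 (\<lambda>t. \<Sum>\<rho>\<in>A. f \<rho> t) = (\<Sum>\<rho>\<in>A. sum4 (f \<rho>))"
  by (simp add: sum4_def sum.distrib)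

lemma dot_lincomb: "dot v (\<lambda>t. \<alpha> * x t + \<beta> * y t) = \<alpha> * dot v x + \<beta> * dot v y"
  by (simp add: dot_def sum4_def algebra_simps)

lemma dot_lincomb3:
  "dot v (\<lambda>t. \<alpha> * x t + \<beta> * y t + \<gamma> * z t) = \<alpha> * dot v x + \<beta> * dot v y + \<gamma> * dot v z"
  by (simp add: dot_def sum4_def algebra_simps)

lemma dot_scale: "dot v (\<lambda>t. \<mu> * x t) = \<mu> * dot v x"
  by (simp add: dot_def sum4_def algebra_simps)

lemma dot_cnj_self_nonzero:
  assumes "nonzero y"
  shows "dot (\<lambda>t. cnj (y t)) y \<noteq> 0"
proof
  assume "dot (\<lambda>t. cnj (y t)) y = 0"
  moreover have "cnj z * z = complex_of_real ((cmod z)\<^sup>2)" for z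
    by (metis complex_norm_square mult.commute)
  ultimately have "complex_of_real
      ((cmod (y I0))\<^sup>2 + (cmod (y I1))\<^sup>2 + (cmod (y I2))\<^sup>2 + (cmod (y I3))\<^sup>2) = 0"
    by (simp add: dot_def sum4_def)
  then have "(cmod (y I0))\<^sup>2 + (cmod (y I1))\<^sup>2 + (cmod (y I2))\<^sup>2 + (cmod (y I3))\<^sup>2 = 0"
    by (simp only: of_real_eq_0_iff)
  then show False
    using assms by (simp add: add_nonneg_eq_0_iff nonzero_iff)
qed

definition idx4_of_nat :: "nat \<Rightarrow> idx4" where
  "idx4_of_nat j = (if j = 0 then I0 else if j = 1 then I1 else if j = 2 then I2 else I3)"

definition nat_of_idx4 :: "idx4 \<Rightarrow> nat" where
  "nat_of_idx4 t = (case t of I0 \<Rightarrow> 0 | I1 \<Rightarrow> 1 | I2 \<Rightarrow> 2 | I3 \<Rightarrow> 3)"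

lemma nat_of_idx4_less [simp]: "nat_of_idx4 t < 4"
  by (cases t) (auto simp: nat_of_idx4_def)

lemma idx4_of_nat_of_idx4 [simp]: "idx4_of_nat (nat_of_idx4 t) = t"
  by (cases t) (auto simp: nat_of_idx4_def idx4_of_nat_def)

lemma nat_of_idx4_of_nat: "j < 4 \<Longrightarrow> nat_of_idx4 (idx4_of_nat j) = j"
  by (auto simp: nat_of_idx4_def idx4_of_nat_def numeral_eq_Suc less_Suc_eq)

section \<open>Linear forms and determinants on \<open>\<complex>\<^sup>4\<close>\<close>

definition mat4 :: "(idx4 \<Rightarrow> idx4 \<Rightarrow> complex) \<Rightarrow> complex mat" where
  "mat4 r = mat 4 4 (\<lambda>(i, j). r (idx4_of_nat i) (idx4_of_nat j))"

lemma mat4_carrier: "mat4 r \<in> carrier_mat 4 4"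
  by (simp add: mat4_def)

lemma transpose_mat4: "transpose_mat (mat4 r) = mat4 (\<lambda>s t. r t s)"
  by (rule eq_matI) (auto simp: mat4_def)

lemma mat4_mult_vec_index:
  assumes "v \<in> carrier_vec 4" "i < 4"
  shows "(mat4 r *\<^sub>v v) $ i = dot (r (idx4_of_nat i)) (\<lambda>t. v $ nat_of_idx4 t)"
proof -
  have "(\<Sum>j\<in>{0..<4::nat}. f j) = f 0 + f 1 + f 2 + (f 3 :: complex)" for f
    by (simp add: eval_nat_numeral atLeast0LessThan)
  with assms show ?thesis
    by (simp add: mat4_def scalar_prod_def dot_def sum4_def idx4_of_nat_def nat_of_idx4_def)
qed

lemma det_mat4_eq_0_iff: "det (mat4 r) = 0 \<longleftrightarrow> (\<exists>y. nonzero y \<and> (\<forall>s. dot (r s) y = 0))"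
proof -
  have zero_iff: "v = 0\<^sub>v 4 \<longleftrightarrow> \<not> nonzero (\<lambda>t. v $ nat_of_idx4 t)" if v: "v \<in> carrier_vec 4" for v
  proof
    assume "\<not> nonzero (\<lambda>t. v $ nat_of_idx4 t)"
    then have zero_at: "v $ nat_of_idx4 (idx4_of_nat j) = 0" for j
      by (simp add: nonzero_def)
    have "v $ j = 0" if "j < 4" for j
      using zero_at[of j] by (simp add: nat_of_idx4_of_nat[OF that])
    then show "v = 0\<^sub>v 4"
      using v by (intro eq_vecI) auto
  qed (auto simp: nonzero_def)
  have kernel_iff: "mat4 r *\<^sub>v v = 0\<^sub>v 4 \<longleftrightarrow> (\<forall>s. dot (r s) (\<lambda>t. v $ nat_of_idx4 t) = 0)"
    if v: "v \<in> carrier_vec 4" for v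
  proof
    assume "mat4 r *\<^sub>v v = 0\<^sub>v 4"
    then have "(mat4 r *\<^sub>v v) $ nat_of_idx4 s = 0" for s
      by simp
    then show "\<forall>s. dot (r s) (\<lambda>t. v $ nat_of_idx4 t) = 0"
      using mat4_mult_vec_index[OF v nat_of_idx4_less] by simp
  next
    assume "\<forall>s. dot (r s) (\<lambda>t. v $ nat_of_idx4 t) = 0"
    then show "mat4 r *\<^sub>v v = 0\<^sub>v 4"
      using mat4_mult_vec_index[OF v] by (intro eq_vecI) (auto simp: mat4_def)
  qed
  show ?thesis
    unfolding det_0_iff_vec_prod_zero[OF mat4_carrier]
  proof
    assume "\<exists>v. v \<in> carrier_vec 4 \<and> v \<noteq> 0\<^sub>v 4 \<and> mat4 r *\<^sub>v v = 0\<^sub>v 4"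
    then show "\<exists>y. nonzero y \<and> (\<forall>s. dot (r s) y = 0)"
      using zero_iff kernel_iff by blast
  next
    assume "\<exists>y. nonzero y \<and> (\<forall>s. dot (r s) y = 0)"
    then obtain y where y: "nonzero y" "\<forall>s. dot (r s) y = 0"
      by blast
    let ?v = "vec 4 (\<lambda>j. y (idx4_of_nat j))"
    have "?v \<in> carrier_vec 4" "?v \<noteq> 0\<^sub>v 4" "mat4 r *\<^sub>v ?v = 0\<^sub>v 4"
      using zero_iff[of ?v] kernel_iff[of ?v] y by simp_all
    then show "\<exists>v. v \<in> carrier_vec 4 \<and> v \<noteq> 0\<^sub>v 4 \<and> mat4 r *\<^sub>v v = 0\<^sub>v 4"
      by blast
  qed
qed

lemma det_mat4_eq_0_iff_dependent:
  "det (mat4 r) = 0 \<longleftrightarrow> (\<exists>d. nonzero d \<and> (\<forall>t. sum4 (\<lambda>s. d s * r s t) = 0))"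
proof -
  have "det (mat4 r) = det (mat4 (\<lambda>s t. r t s))"
    using det_transpose[OF mat4_carrier, of r] by (simp add: transpose_mat4)
  then show ?thesis
    using det_mat4_eq_0_iff[of "\<lambda>s t. r t s"] by (simp add: dot_def mult.commute)
qed

lemma linear_forms3_common_zero:
  obtains y where "nonzero y" "dot v1 y = 0" "dot v2 y = 0" "dot v3 y = 0"
proof -
  define r where "r = (\<lambda>s. if s = I0 then v1 else if s = I1 then v2 else if s = I2 then v3 else (\<lambda>_. 0))"
  have "det (mat4 r) = 0"
    unfolding det_mat4_eq_0_iff_dependent
    by (rule exI[of _ "\<lambda>s. if s = I3 then 1 else 0"]) (simp add: nonzero_def sum4_def r_def)
  then obtain y where y: "nonzero y" "\<And>s. dot (r s) y = 0"
    unfolding det_mat4_eq_0_iff by blast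
  show ?thesis
    by (rule that[OF y(1)]) (use y(2)[of I0] y(2)[of I1] y(2)[of I2] in \<open>simp_all add: r_def\<close>)
qed

definition indep3 :: "(idx4 \<Rightarrow> complex) \<Rightarrow> (idx4 \<Rightarrow> complex) \<Rightarrow> (idx4 \<Rightarrow> complex) \<Rightarrow> bool" where
  "indep3 v1 v2 v3 \<longleftrightarrow>
     (\<forall>\<alpha> \<beta> \<gamma>. (\<forall>t. \<alpha> * v1 t + \<beta> * v2 t + \<gamma> * v3 t = 0) \<longrightarrow> \<alpha> = 0 \<and> \<beta> = 0 \<and> \<gamma> = 0)"

definition parallel :: "(idx4 \<Rightarrow> complex) \<Rightarrow> (idx4 \<Rightarrow> complex) \<Rightarrow> bool" where
  "parallel x y \<longleftrightarrow> (\<exists>\<mu>. \<forall>t. y t = \<mu> * x t)"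

definition in_span3 ::
  "(idx4 \<Rightarrow> complex) \<Rightarrow> (idx4 \<Rightarrow> complex) \<Rightarrow> (idx4 \<Rightarrow> complex) \<Rightarrow> (idx4 \<Rightarrow> complex) \<Rightarrow> bool" where
  "in_span3 v1 v2 v3 w \<longleftrightarrow> (\<exists>\<alpha> \<beta> \<gamma>. \<forall>t. w t = \<alpha> * v1 t + \<beta> * v2 t + \<gamma> * v3 t)"

lemma lincomb_eq_0_solve:
  fixes \<alpha> \<beta> \<gamma> v x y :: "'a :: field"
  assumes "\<alpha> * v + \<beta> * x + \<gamma> * y = 0" "\<alpha> \<noteq> 0"
  shows "v = (- \<beta> / \<alpha>) * x + (- \<gamma> / \<alpha>) * y"
proof -
  have "\<alpha> * v = - (\<beta> * x) - \<gamma> * y"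
    using assms(1) by (simp add: algebra_simps eq_neg_iff_add_eq_0 flip: diff_eq_eq)
  then show ?thesis
    using assms(2) by (simp add: field_simps)
qed

lemma lincomb2_eq_0_solve:
  fixes \<alpha> \<beta> v x :: "'a :: field"
  assumes "\<alpha> * v + \<beta> * x = 0" "\<alpha> \<noteq> 0"
  shows "v = (- \<beta> / \<alpha>) * x"
  using lincomb_eq_0_solve[of \<alpha> v \<beta> x 0 0] assms by simp

lemma indep3D:
  "indep3 v1 v2 v3 \<Longrightarrow> (\<And>t. \<alpha> * v1 t + \<beta> * v2 t + \<gamma> * v3 t = 0) \<Longrightarrow> \<alpha> = 0 \<and> \<beta> = 0 \<and> \<gamma> = 0"
  unfolding indep3_def by blast

lemma indep3_nonzero:
  assumes "indep3 v1 v2 v3"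
  shows "nonzero v1"
proof (rule ccontr)
  assume "\<not> nonzero v1"
  then have "\<And>t. 1 * v1 t + 0 * v2 t + 0 * v3 t = 0"
    by (simp add: nonzero_def)
  from indep3D[OF assms this] show False by simp
qed

lemma parallel_of_lincomb:
  assumes "\<forall>t. \<beta> * x t + \<gamma> * y t = 0" "\<gamma> \<noteq> 0"
  shows "parallel x y"
proof -
  have "y t = (- \<beta> / \<gamma>) * x t" for t
    using lincomb2_eq_0_solve[of \<gamma> "y t" \<beta> "x t"] assms by (simp add: add.commute)
  then show ?thesis
    unfolding parallel_def by blast
qed

lemma lincomb_coeffs_nonzero_if_nonparallel:
  assumes "\<And>t. z t = \<alpha> * x t + \<beta> * y t" "\<not> parallel x z" "\<not> parallel y z"
  shows "\<alpha> \<noteq> 0" "\<beta> \<noteq> 0"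
proof -
  show "\<alpha> \<noteq> 0"
  proof
    assume "\<alpha> = 0"
    with assms(1) have "\<forall>t. z t = \<beta> * y t" by simp
    with assms(3) show False unfolding parallel_def by blast
  qed
  show "\<beta> \<noteq> 0"
  proof
    assume "\<beta> = 0"
    with assms(1) have "\<forall>t. z t = \<alpha> * x t" by simp
    with assms(2) show False unfolding parallel_def by blast
  qed
qed

lemma scale_eq_0_nonzero: "(\<forall>t. \<beta> * x t = 0) \<Longrightarrow> nonzero x \<Longrightarrow> \<beta> = 0"
  by (auto simp: nonzero_def)

lemma in_span2_if_dependent:
  assumes "\<not> indep3 v x x'" "nonzero x" "\<not> parallel x x'"
  obtains s s' where "\<And>t. v t = s * x t + s' * x' t"
proof -
  obtain \<alpha> \<beta> \<gamma> where comb: "\<forall>t. \<alpha> * v t + \<beta> * x t + \<gamma> * x' t = 0"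
    and nontrivial: "\<not> (\<alpha> = 0 \<and> \<beta> = 0 \<and> \<gamma> = 0)"
    using assms(1) unfolding indep3_def by blast
  have "\<alpha> \<noteq> 0"
  proof
    assume "\<alpha> = 0"
    then have xx': "\<forall>t. \<beta> * x t + \<gamma> * x' t = 0" using comb by simp
    then have "\<gamma> = 0" using parallel_of_lincomb assms(3) by blast
    with xx' have "\<forall>t. \<beta> * x t = 0" by simp
    then have "\<beta> = 0" using scale_eq_0_nonzero assms(2) by blast
    with \<open>\<alpha> = 0\<close> \<open>\<gamma> = 0\<close> nontrivial show False by simp
  qed
  then have "v t = (- \<beta> / \<alpha>) * x t + (- \<gamma> / \<alpha>) * x' t" for t
    using comb lincomb_eq_0_solve by blast
  then show ?thesis using that by blast
qed

lemma linear_form3_kernel_plane: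
  fixes f1 f2 f3 :: "'a :: field"
  obtains a1 a2 a3 b1 b2 b3 where
    "a1 * f1 + a2 * f2 + a3 * f3 = 0" "b1 * f1 + b2 * f2 + b3 * f3 = 0"
    "a1 \<noteq> 0 \<or> a2 \<noteq> 0 \<or> a3 \<noteq> 0" "\<And>\<mu>. \<not> (b1 = \<mu> * a1 \<and> b2 = \<mu> * a2 \<and> b3 = \<mu> * a3)"
proof (cases "f1 = 0")
  case False
  show ?thesis
    by (rule that[of f2 "- f1" 0 f3 0 "- f1"]) (use False in \<open>auto simp: algebra_simps\<close>)
next
  case True
  show ?thesis
  proof (cases "f2 = 0 \<and> f3 = 0")
    case True
    show ?thesis
      by (rule that[of 1 0 0 0 1 0]) (use True \<open>f1 = 0\<close> in auto)
  next
    case False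
    show ?thesis
      by (rule that[of 1 0 0 0 f3 "- f2"]) (use False \<open>f1 = 0\<close> in \<open>auto simp: algebra_simps\<close>)
  qed
qed

lemma indep3_hyperplane_section:
  assumes ind: "indep3 v1 v2 v3"
  obtains w1 w2 where "nonzero w1" "\<not> parallel w1 w2" "dot f w1 = 0" "dot f w2 = 0"
    "in_span3 v1 v2 v3 w1" "in_span3 v1 v2 v3 w2"
proof -
  obtain a1 a2 a3 b1 b2 b3 where
    a: "a1 * dot f v1 + a2 * dot f v2 + a3 * dot f v3 = 0" and
    b: "b1 * dot f v1 + b2 * dot f v2 + b3 * dot f v3 = 0" and
    a_nonzero: "a1 \<noteq> 0 \<or> a2 \<noteq> 0 \<or> a3 \<noteq> 0" and
    not_proportional: "\<And>\<mu>. \<not> (b1 = \<mu> * a1 \<and> b2 = \<mu> * a2 \<and> b3 = \<mu> * a3)"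
    using linear_form3_kernel_plane[of "dot f v1" "dot f v2" "dot f v3"] by blast
  define w1 where "w1 = (\<lambda>t. a1 * v1 t + a2 * v2 t + a3 * v3 t)"
  define w2 where "w2 = (\<lambda>t. b1 * v1 t + b2 * v2 t + b3 * v3 t)"
  have "nonzero w1"
  proof (rule ccontr)
    assume "\<not> nonzero w1"
    then have "\<And>t. a1 * v1 t + a2 * v2 t + a3 * v3 t = 0"
      by (simp add: nonzero_def w1_def)
    from indep3D[OF ind this] a_nonzero show False by simp
  qed
  moreover have "\<not> parallel w1 w2"
  proof
    assume "parallel w1 w2"
    then obtain \<mu> where "\<forall>t. w2 t = \<mu> * w1 t"
      unfolding parallel_def by blast
    moreover have "(b1 - \<mu> * a1) * v1 t + (b2 - \<mu> * a2) * v2 t + (b3 - \<mu> * a3) * v3 t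
        = w2 t - \<mu> * w1 t" for t
      by (simp add: w1_def w2_def algebra_simps)
    ultimately have "\<And>t. (b1 - \<mu> * a1) * v1 t + (b2 - \<mu> * a2) * v2 t + (b3 - \<mu> * a3) * v3 t = 0"
      by simp
    from indep3D[OF ind this] not_proportional[of \<mu>] show False by simp
  qed
  moreover have "dot f w1 = 0" "dot f w2 = 0"
    using a b unfolding w1_def w2_def dot_lincomb3 by simp_all
  moreover have "in_span3 v1 v2 v3 w1" "in_span3 v1 v2 v3 w2"
    unfolding in_span3_def w1_def w2_def by blast+
  ultimately show thesis by (rule that)
qed

section \<open>The quadratic form \<open>q\<close> and its polar form\<close>

definition qf :: "(idx4 \<Rightarrow> complex) \<Rightarrow> complex" where
  "qf x = x I0 * x I1 - x I2 * x I3"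

definition polar :: "(idx4 \<Rightarrow> complex) \<Rightarrow> (idx4 \<Rightarrow> complex) \<Rightarrow> complex" where
  "polar x y = x I0 * y I1 + x I1 * y I0 - x I2 * y I3 - x I3 * y I2"

lemma polar_sym: "polar x y = polar y x"
  by (simp add: polar_def algebra_simps)

lemma qf_lincomb: "qf (\<lambda>t. \<alpha> * x t + \<beta> * y t) = \<alpha> * \<alpha> * qf x + \<beta> * \<beta> * qf y + \<alpha> * \<beta> * polar x y"
  by (simp add: qf_def polar_def algebra_simps)

lemma polar_lincomb:
  "polar (\<lambda>t. s * x t + s' * y t) (\<lambda>t. u * x t + u' * y t)
     = 2 * s * u * qf x + (s * u' + s' * u) * polar x y + 2 * s' * u' * qf y"
  by (simp add: polar_def qf_def algebra_simps)

lemma polar_eq_0_if_isotropic_lincomb: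
  assumes "\<And>t. z t = \<alpha> * x t + \<beta> * y t" "qf x = 0" "qf y = 0" "qf z = 0" "\<alpha> \<noteq> 0" "\<beta> \<noteq> 0"
  shows "polar x y = 0"
proof -
  have "z = (\<lambda>t. \<alpha> * x t + \<beta> * y t)"
    using assms(1) by (simp add: fun_eq_iff)
  with assms(2-6) show ?thesis
    by (simp add: qf_lincomb)
qed

lemma polar_eq_0_on_isotropic_span:
  assumes "qf x = 0" "qf y = 0" "polar x y = 0"
    and "\<And>t. v t = s * x t + s' * y t" "\<And>t. w t = u * x t + u' * y t"
  shows "polar v w = 0"
proof -
  have "polar v w = polar (\<lambda>t. s * x t + s' * y t) (\<lambda>t. u * x t + u' * y t)"
    using assms(4,5) by (simp add: polar_def)
  with assms(1-3) show ?thesis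
    by (simp add: polar_lincomb)
qed

definition flip :: "(idx4 \<Rightarrow> complex) \<Rightarrow> idx4 \<Rightarrow> complex" where
  "flip x = (\<lambda>t. case t of I0 \<Rightarrow> x I1 | I1 \<Rightarrow> x I0 | I2 \<Rightarrow> - x I3 | I3 \<Rightarrow> - x I2)"

lemma dot_flip: "dot w (flip x) = polar x w"
  by (simp add: dot_def sum4_def flip_def polar_def algebra_simps)

lemma flip_flip [simp]: "flip (flip x) = x"
  by (rule ext) (simp add: flip_def split: idx4.split)

lemma flip_scale: "flip (\<lambda>t. \<mu> * y t) = (\<lambda>t. \<mu> * flip y t)"
  by (rule ext) (simp add: flip_def split: idx4.split)

lemma annihilator_indep3_is_line:
  assumes ind: "indep3 w1 w2 w3"
  obtains y where "nonzero y"
    "\<And>p. dot w1 p = 0 \<Longrightarrow> dot w2 p = 0 \<Longrightarrow> dot w3 p = 0 \<Longrightarrow> parallel y p"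
proof -
  obtain y where y: "nonzero y" "dot w1 y = 0" "dot w2 y = 0" "dot w3 y = 0"
    using linear_forms3_common_zero by blast
  txt \<open>The form \<open>cnj y\<close> does not vanish at \<open>y\<close>, so together with \<open>w1, w2, w3\<close> it is
    a basis of the dual space.\<close>
  define v where "v = (\<lambda>t. cnj (y t))"
  have vy: "dot v y \<noteq> 0"
    using dot_cnj_self_nonzero[OF y(1)] by (simp add: v_def)
  define r where "r = (\<lambda>s. if s = I0 then w1 else if s = I1 then w2 else if s = I2 then w3 else v)"
  have "det (mat4 r) \<noteq> 0"
  proof
    assume "det (mat4 r) = 0"
    then obtain d where d: "nonzero d" "\<And>t. sum4 (\<lambda>s. d s * r s t) = 0"
      unfolding det_mat4_eq_0_iff_dependent by blast
    then have comb: "\<And>t. d I0 * w1 t + d I1 * w2 t + d I2 * w3 t + d I3 * v t = 0"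
      by (simp add: sum4_def r_def)
    have "d I0 * dot w1 y + d I1 * dot w2 y + d I2 * dot w3 y + d I3 * dot v y
        = dot (\<lambda>t. d I0 * w1 t + d I1 * w2 t + d I2 * w3 t + d I3 * v t) y"
      by (simp add: dot_def sum4_def algebra_simps)
    then have "d I3 = 0"
      using comb y vy by (simp add: dot_def sum4_def)
    with comb have "\<And>t. d I0 * w1 t + d I1 * w2 t + d I2 * w3 t = 0"
      by simp
    from indep3D[OF ind this] have "d I0 = 0 \<and> d I1 = 0 \<and> d I2 = 0" .
    with \<open>d I3 = 0\<close> d(1) show False by (simp add: nonzero_iff)
  qed
  then have kernel_trivial: "\<not> nonzero z" if "\<forall>s. dot (r s) z = 0" for z
    using that det_mat4_eq_0_iff by blast
  have "parallel y p" if p: "dot w1 p = 0" "dot w2 p = 0" "dot w3 p = 0" for p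
  proof -
    have "\<not> nonzero (\<lambda>t. dot v y * p t + (- dot v p) * y t)"
      by (rule kernel_trivial) (unfold all_idx4 dot_lincomb, simp add: r_def p y)
    then have "p t = (dot v p / dot v y) * y t" for t
      using lincomb2_eq_0_solve[of "dot v y" "p t" "- dot v p" "y t"] vy by (simp add: nonzero_def)
    then show ?thesis unfolding parallel_def by blast
  qed
  with y(1) show ?thesis using that by blast
qed

lemma no_isotropic_indep3:
  assumes ind: "indep3 w1 w2 w3"
    and "polar w1 w1 = 0" "polar w2 w2 = 0" "polar w3 w3 = 0"
    and "polar w1 w2 = 0" "polar w1 w3 = 0" "polar w2 w3 = 0"
  shows False
proof -
  obtain y where line: "\<And>p. dot w1 p = 0 \<Longrightarrow> dot w2 p = 0 \<Longrightarrow> dot w3 p = 0 \<Longrightarrow> parallel y p"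
    using annihilator_indep3_is_line[OF ind] by blast
  have "parallel y (flip w1)" "parallel y (flip w2)"
    using assms(2-7) by (auto intro!: line simp: dot_flip polar_sym)
  then obtain l1 l2 where l: "flip w1 = (\<lambda>t. l1 * y t)" "flip w2 = (\<lambda>t. l2 * y t)"
    unfolding parallel_def by (auto simp: fun_eq_iff)
  have unflip: "w = (\<lambda>t. l * flip y t)" if "flip w = (\<lambda>t. l * y t)" for w l
  proof -
    have "w = flip (flip w)" by simp
    also have "\<dots> = (\<lambda>t. l * flip y t)" by (simp only: that flip_scale)
    finally show ?thesis .
  qed
  note w = unflip[OF l(1)] unflip[OF l(2)]
  show False
  proof (cases "l1 = 0")
    case True
    with w have "\<And>t. 1 * w1 t + 0 * w2 t + 0 * w3 t = 0"
      by simp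
    from indep3D[OF ind this] show False by simp
  next
    case False
    from w have "\<And>t. l2 * w1 t + (- l1) * w2 t + 0 * w3 t = 0"
      by simp
    from indep3D[OF ind this] False show False by simp
  qed
qed

section \<open>\<open>U\<^sub>7\<close> as a tensor and its contractions\<close>

text \<open>\<open>U7_tensor \<alpha> \<beta> \<gamma>\<close> is the coefficient of \<open>S\<^sub>\<alpha> \<otimes> S\<^sub>\<beta> \<otimes> S\<^sub>\<gamma>\<close> in \<open>U\<^sub>7\<close>.\<close>

definition U7_tensor :: "idx4 \<Rightarrow> idx4 \<Rightarrow> idx4 \<Rightarrow> complex" where
  "U7_tensor \<alpha> \<beta> \<gamma> =
     (if (\<alpha>, \<beta>, \<gamma>) \<in> {(I1, I2, I0), (I2, I3, I0), (I0, I0, I1), (I3, I1, I1),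
                      (I1, I1, I2), (I2, I0, I2), (I0, I3, I3), (I3, I2, I3)} then 1 else 0)"

definition contract23 :: "(idx4 \<Rightarrow> complex) \<Rightarrow> (idx4 \<Rightarrow> complex) \<Rightarrow> idx4 \<Rightarrow> complex" where
  "contract23 x y \<alpha> = sum4 (\<lambda>\<beta>. sum4 (\<lambda>\<gamma>. U7_tensor \<alpha> \<beta> \<gamma> * x \<gamma> * y \<beta>))"

definition contract13 :: "(idx4 \<Rightarrow> complex) \<Rightarrow> (idx4 \<Rightarrow> complex) \<Rightarrow> idx4 \<Rightarrow> complex" where
  "contract13 x z \<beta> = sum4 (\<lambda>\<alpha>. sum4 (\<lambda>\<gamma>. U7_tensor \<alpha> \<beta> \<gamma> * x \<gamma> * z \<alpha>))"

lemma contract23_simps: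
  "contract23 x y I0 = x I1 * y I0 + x I3 * y I3" "contract23 x y I1 = x I2 * y I1 + x I0 * y I2"
  "contract23 x y I2 = x I2 * y I0 + x I0 * y I3" "contract23 x y I3 = x I1 * y I1 + x I3 * y I2"
  by (simp_all add: contract23_def sum4_def U7_tensor_def)

lemma contract13_simps:
  "contract13 x z I0 = z I0 * x I1 + z I2 * x I2" "contract13 x z I1 = z I3 * x I1 + z I1 * x I2"
  "contract13 x z I2 = z I3 * x I3 + z I1 * x I0" "contract13 x z I3 = z I0 * x I3 + z I2 * x I0"
  by (simp_all add: contract13_def sum4_def U7_tensor_def algebra_simps)

text \<open>As a linear map in \<open>y\<close>, \<open>contract23 x\<close> splits into two \<open>2 \<times> 2\<close> blocks of determinant \<open>\<plusminus>q(x)\<close>.\<close>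

lemma qf_eq_0_if_contract23_vanishes:
  assumes "nonzero y" "\<And>t. contract23 x y t = 0"
  shows "qf x = 0"
proof -
  have "qf x * y I0 = x I0 * contract23 x y I0 - x I3 * contract23 x y I2"
       "qf x * y I3 = x I1 * contract23 x y I2 - x I2 * contract23 x y I0"
       "qf x * y I1 = x I0 * contract23 x y I3 - x I3 * contract23 x y I1"
       "qf x * y I2 = x I1 * contract23 x y I1 - x I2 * contract23 x y I3"
    by (simp_all add: contract23_simps qf_def algebra_simps)
  then show ?thesis using assms by (auto simp: nonzero_iff)
qed

lemma contract23_vanishes_on_hyperplane:
  assumes "\<And>y t. dot v y = 0 \<Longrightarrow> contract23 x y t = 0"
  shows "\<not> nonzero x"
proof -
  define e :: "idx4 \<Rightarrow> idx4 \<Rightarrow> complex" where "e s = (\<lambda>t. if t = s then 1 else 0)" for s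
  have dot_e: "dot (e s) y = y s" for s y
    by (cases s) (simp_all add: e_def dot_def sum4_def)
  obtain y1 where y1: "nonzero y1" "dot v y1 = 0" "dot (e I2) y1 = 0" "dot (e I3) y1 = 0"
    using linear_forms3_common_zero .
  obtain y2 where y2: "nonzero y2" "dot v y2 = 0" "dot (e I0) y2 = 0" "dot (e I1) y2 = 0"
    using linear_forms3_common_zero .
  have "y1 I0 \<noteq> 0 \<or> y1 I1 \<noteq> 0" "y2 I2 \<noteq> 0 \<or> y2 I3 \<noteq> 0"
    using y1 y2 by (auto simp: nonzero_iff dot_e)
  moreover have "x I1 * y1 I0 = 0" "x I2 * y1 I1 = 0" "x I2 * y1 I0 = 0" "x I1 * y1 I1 = 0"
    "x I3 * y2 I3 = 0" "x I0 * y2 I2 = 0" "x I0 * y2 I3 = 0" "x I3 * y2 I2 = 0"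
    using assms[OF y1(2), of I0] assms[OF y1(2), of I1] assms[OF y1(2), of I2] assms[OF y1(2), of I3]
      assms[OF y2(2), of I0] assms[OF y2(2), of I1] assms[OF y2(2), of I2] assms[OF y2(2), of I3]
      y1(3,4) y2(3,4)
    by (simp_all add: contract23_simps dot_e)
  ultimately show ?thesis by (auto simp: nonzero_iff)
qed

lemma orthogonal_complement_2:
  fixes a b p1 p2 :: "'a :: field"
  assumes "p1 \<noteq> 0 \<or> p2 \<noteq> 0" "a * p1 + b * p2 = 0"
  obtains u where "a = u * p2" "b = - u * p1"
proof (cases "p2 = 0")
  case True
  with assms have "p1 \<noteq> 0" "a = 0" by auto
  then show ?thesis using that[of "- b / p1"] True by simp
next
  case False
  with assms(2) have "b = - (a / p2) * p1"
    by (simp add: field_simps eq_neg_iff_add_eq_0 add.commute)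
  then show ?thesis using that[of "a / p2"] False by simp
qed

lemma rank_one_2x2_if_annihilated:
  fixes a b c d p q r s :: "'a :: field"
  assumes pq: "p \<noteq> 0 \<or> q \<noteq> 0" and rs: "r \<noteq> 0 \<or> s \<noteq> 0"
    and "a * p + b * q = 0" "c * p + d * q = 0"
    and "r * a + s * c = 0" "r * b + s * d = 0"
  obtains l where "a = l * s * q" "b = - l * s * p" "c = - l * r * q" "d = l * r * p"
proof -
  obtain u1 where u1: "a = u1 * q" "b = - u1 * p"
    using orthogonal_complement_2[OF pq assms(3)] .
  obtain u2 where u2: "c = u2 * q" "d = - u2 * p"
    using orthogonal_complement_2[OF pq assms(4)] .
  have "(u1 * r + u2 * s) * q = r * a + s * c" "(u1 * r + u2 * s) * p = - (r * b + s * d)"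
    using u1 u2 by (simp_all add: algebra_simps)
  then have "(u1 * r + u2 * s) * q = 0" "(u1 * r + u2 * s) * p = 0"
    using assms(5,6) by simp_all
  then have "u1 * r + u2 * s = 0"
    using pq by auto
  then obtain l where "u1 = l * s" "u2 = - l * r"
    by (rule orthogonal_complement_2[OF rs])
  with u1 u2 show ?thesis
    by (intro that[of l]) simp_all
qed

lemma contract23_kernel_equations:
  assumes "nonzero y"
  obtains p1 p2 where "p1 \<noteq> 0 \<or> p2 \<noteq> 0"
    "\<And>w. (\<And>t. contract23 w y t = 0) \<Longrightarrow> w I1 * p1 + w I3 * p2 = 0 \<and> w I2 * p1 + w I0 * p2 = 0"
proof (cases "y I0 \<noteq> 0 \<or> y I3 \<noteq> 0")
  case True
  show ?thesis
  proof (rule that[of "y I0" "y I3"])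
    fix w assume "\<And>t. contract23 w y t = 0"
    then show "w I1 * y I0 + w I3 * y I3 = 0 \<and> w I2 * y I0 + w I0 * y I3 = 0"
      using contract23_simps(1,3)[of w y] by simp
  qed (use True in simp)
next
  case False
  then have "y I1 \<noteq> 0 \<or> y I2 \<noteq> 0"
    using assms by (auto simp: nonzero_iff)
  show ?thesis
  proof (rule that[of "y I1" "y I2"])
    fix w assume "\<And>t. contract23 w y t = 0"
    then show "w I1 * y I1 + w I3 * y I2 = 0 \<and> w I2 * y I1 + w I0 * y I2 = 0"
      using contract23_simps(4,2)[of w y] by simp
  qed fact
qed

lemma contract13_kernel_equations:
  assumes "nonzero z"
  obtains r1 r2 where "r1 \<noteq> 0 \<or> r2 \<noteq> 0"
    "\<And>w. (\<And>t. contract13 w z t = 0) \<Longrightarrow> r1 * w I1 + r2 * w I2 = 0 \<and> r1 * w I3 + r2 * w I0 = 0"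
proof (cases "z I0 \<noteq> 0 \<or> z I2 \<noteq> 0")
  case True
  show ?thesis
  proof (rule that[of "z I0" "z I2"])
    fix w assume "\<And>t. contract13 w z t = 0"
    then show "z I0 * w I1 + z I2 * w I2 = 0 \<and> z I0 * w I3 + z I2 * w I0 = 0"
      using contract13_simps(1,4)[of w z] by simp
  qed (use True in simp)
next
  case False
  then have "z I3 \<noteq> 0 \<or> z I1 \<noteq> 0"
    using assms by (auto simp: nonzero_iff)
  show ?thesis
  proof (rule that[of "z I3" "z I1"])
    fix w assume "\<And>t. contract13 w z t = 0"
    then show "z I3 * w I1 + z I1 * w I2 = 0 \<and> z I3 * w I3 + z I1 * w I0 = 0"
      using contract13_simps(2,3)[of w z] by simp
  qed fact
qed

lemma parallel_if_contractions_vanish: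
  assumes y: "nonzero y" and z: "nonzero z" and "nonzero x"
    and x: "\<And>t. contract23 x y t = 0" "\<And>t. contract13 x z t = 0"
    and x': "\<And>t. contract23 x' y t = 0" "\<And>t. contract13 x' z t = 0"
  shows "parallel x x'"
proof -
  obtain p1 p2 where p: "p1 \<noteq> 0 \<or> p2 \<noteq> 0"
    and pe: "\<And>w. (\<And>t. contract23 w y t = 0) \<Longrightarrow> w I1 * p1 + w I3 * p2 = 0 \<and> w I2 * p1 + w I0 * p2 = 0"
    using contract23_kernel_equations[OF y] by blast
  obtain r1 r2 where r: "r1 \<noteq> 0 \<or> r2 \<noteq> 0"
    and re: "\<And>w. (\<And>t. contract13 w z t = 0) \<Longrightarrow> r1 * w I1 + r2 * w I2 = 0 \<and> r1 * w I3 + r2 * w I0 = 0"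
    using contract13_kernel_equations[OF z] by blast
  obtain l where l: "x I1 = l * r2 * p2" "x I3 = - l * r2 * p1" "x I2 = - l * r1 * p2" "x I0 = l * r1 * p1"
    using rank_one_2x2_if_annihilated[OF p r, where a = "x I1" and b = "x I3" and c = "x I2"
        and d = "x I0"] pe[OF x(1)] re[OF x(2)] by blast
  obtain l' where l': "x' I1 = l' * r2 * p2" "x' I3 = - l' * r2 * p1" "x' I2 = - l' * r1 * p2"
      "x' I0 = l' * r1 * p1"
    using rank_one_2x2_if_annihilated[OF p r, where a = "x' I1" and b = "x' I3" and c = "x' I2"
        and d = "x' I0"] pe[OF x'(1)] re[OF x'(2)] by blast
  have "l \<noteq> 0"
    using \<open>nonzero x\<close> l by (auto simp: nonzero_iff)
  then show ?thesis
    unfolding parallel_def by (intro exI[of _ "l' / l"]) (simp add: all_idx4 l l')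
qed

section \<open>A rank-six decomposition of \<open>U\<^sub>7\<close> is impossible\<close>

definition perm6 :: "nat \<Rightarrow> nat \<Rightarrow> nat \<Rightarrow> nat \<Rightarrow> nat \<Rightarrow> nat \<Rightarrow> bool" where
  "perm6 i j k l m n \<longleftrightarrow> {i, j, k, l, m, n} = {..<6}"

lemma perm6_cases:
  assumes "perm6 i j k l m n" "\<rho> < 6"
  shows "\<rho> = i \<or> \<rho> = j \<or> \<rho> = k \<or> \<rho> = l \<or> \<rho> = m \<or> \<rho> = n"
proof -
  have "\<rho> \<in> {i, j, k, l, m, n}"
    using assms by (simp add: perm6_def)
  then show ?thesis by simp
qed

locale rank6_decomposition =
  fixes a b c :: "nat \<Rightarrow> idx4 \<Rightarrow> complex"
  assumes U7_tensor_eq_sum: "\<And>\<alpha> \<beta> \<gamma>. U7_tensor \<alpha> \<beta> \<gamma> = (\<Sum>\<rho><6. a \<rho> \<alpha> * b \<rho> \<beta> * c \<rho> \<gamma>)"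
begin

lemma contract23_eq_sum: "contract23 x y \<alpha> = (\<Sum>\<rho><6. dot (c \<rho>) x * dot (b \<rho>) y * a \<rho> \<alpha>)"
proof -
  have "contract23 x y \<alpha>
      = (\<Sum>\<rho><6. sum4 (\<lambda>\<beta>. sum4 (\<lambda>\<gamma>. a \<rho> \<alpha> * b \<rho> \<beta> * c \<rho> \<gamma> * x \<gamma> * y \<beta>)))"
    unfolding contract23_def U7_tensor_eq_sum by (simp add: sum_distrib_right sum4_sum)
  also have "\<dots> = (\<Sum>\<rho><6. dot (c \<rho>) x * dot (b \<rho>) y * a \<rho> \<alpha>)"
    by (rule sum.cong) (simp_all add: dot_def sum4_def algebra_simps)
  finally show ?thesis .
qed

lemma contract13_eq_sum: "contract13 x z \<beta> = (\<Sum>\<rho><6. dot (c \<rho>) x * dot (a \<rho>) z * b \<rho> \<beta>)"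
proof -
  have "contract13 x z \<beta>
      = (\<Sum>\<rho><6. sum4 (\<lambda>\<alpha>. sum4 (\<lambda>\<gamma>. a \<rho> \<alpha> * b \<rho> \<beta> * c \<rho> \<gamma> * x \<gamma> * z \<alpha>)))"
    unfolding contract13_def U7_tensor_eq_sum by (simp add: sum_distrib_right sum4_sum)
  also have "\<dots> = (\<Sum>\<rho><6. dot (c \<rho>) x * dot (a \<rho>) z * b \<rho> \<beta>)"
    by (rule sum.cong) (simp_all add: dot_def sum4_def algebra_simps)
  finally show ?thesis .
qed

definition in_ker :: "nat \<Rightarrow> (idx4 \<Rightarrow> complex) \<Rightarrow> bool" where
  "in_ker \<rho> x \<longleftrightarrow> dot (c \<rho>) x = 0"

definition isotropic_pair :: "nat \<Rightarrow> nat \<Rightarrow> bool" where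
  "isotropic_pair i j \<longleftrightarrow>
     (\<forall>x y. in_ker i x \<longrightarrow> in_ker j x \<longrightarrow> in_ker i y \<longrightarrow> in_ker j y \<longrightarrow> polar x y = 0)"

lemma in_ker_span3:
  assumes "in_ker \<rho> v1" "in_ker \<rho> v2" "in_ker \<rho> v3" "in_span3 v1 v2 v3 w"
  shows "in_ker \<rho> w"
proof -
  obtain \<alpha> \<beta> \<gamma> where "\<forall>t. w t = \<alpha> * v1 t + \<beta> * v2 t + \<gamma> * v3 t"
    using assms(4) unfolding in_span3_def by blast
  then have "w = (\<lambda>t. \<alpha> * v1 t + \<beta> * v2 t + \<gamma> * v3 t)"
    by (simp add: fun_eq_iff)
  with assms(1-3) show ?thesis
    by (simp add: in_ker_def dot_lincomb3)
qed

lemma in_ker_parallel_iff: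
  assumes "\<forall>t. y t = \<mu> * x t" "\<mu> \<noteq> 0"
  shows "in_ker \<rho> y \<longleftrightarrow> in_ker \<rho> x"
proof -
  have "y = (\<lambda>t. \<mu> * x t)"
    using assms(1) by (simp add: fun_eq_iff)
  then show ?thesis
    using assms(2) by (simp add: in_ker_def dot_scale)
qed

lemma in_ker_parallel:
  assumes "parallel x y" "in_ker \<rho> x"
  shows "in_ker \<rho> y"
proof -
  obtain \<mu> where \<mu>: "\<forall>t. y t = \<mu> * x t"
    using assms(1) unfolding parallel_def by blast
  show ?thesis
  proof (cases "\<mu> = 0")
    case True
    then have "y = (\<lambda>_. 0)" using \<mu> by (simp add: fun_eq_iff)
    then show ?thesis by (simp add: in_ker_def dot_def sum4_def)
  qed (use in_ker_parallel_iff[OF \<mu>] assms(2) in blast)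
qed

lemma in_ker_parallel_rev:
  assumes "parallel x y" "nonzero y" "in_ker \<rho> y"
  shows "in_ker \<rho> x"
proof -
  obtain \<mu> where \<mu>: "\<forall>t. y t = \<mu> * x t"
    using assms(1) unfolding parallel_def by blast
  moreover have "\<mu> \<noteq> 0"
    using \<mu> assms(2) by (auto simp: nonzero_def)
  ultimately show ?thesis
    using in_ker_parallel_iff assms(3) by blast
qed

lemma ker3_nonzero:
  obtains x where "nonzero x" "in_ker i x" "in_ker j x" "in_ker k x"
  using linear_forms3_common_zero[of "c i" "c j" "c k"] by (auto simp: in_ker_def)

text \<open>Vectors orthogonal to the three remaining \<open>b\<^sub>\<rho>\<close> resp. \<open>a\<^sub>\<rho>\<close> make every term of the
  decomposition vanish.\<close>

lemma contractions_vanish_on_ker3: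
  assumes p: "perm6 i j k l m n"
  shows "\<exists>y z. nonzero y \<and> nonzero z \<and>
    (\<forall>x t. in_ker i x \<longrightarrow> in_ker j x \<longrightarrow> in_ker k x \<longrightarrow> contract23 x y t = 0 \<and> contract13 x z t = 0)"
proof -
  obtain y where y: "nonzero y" "dot (b l) y = 0" "dot (b m) y = 0" "dot (b n) y = 0"
    using linear_forms3_common_zero by blast
  obtain z where z: "nonzero z" "dot (a l) z = 0" "dot (a m) z = 0" "dot (a n) z = 0"
    using linear_forms3_common_zero by blast
  have vanish: "contract23 x y t = 0 \<and> contract13 x z t = 0"
    if "in_ker i x" "in_ker j x" "in_ker k x" for x t
  proof -
    have term_vanishes: "dot (c \<rho>) x = 0 \<or> (dot (b \<rho>) y = 0 \<and> dot (a \<rho>) z = 0)"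
      if "\<rho> < 6" for \<rho>
      using perm6_cases[OF p that] \<open>in_ker i x\<close> \<open>in_ker j x\<close> \<open>in_ker k x\<close> y z
      by (auto simp: in_ker_def)
    show ?thesis
      unfolding contract23_eq_sum contract13_eq_sum
      by (intro conjI sum.neutral ballI) (use term_vanishes in auto)
  qed
  with y(1) z(1) show ?thesis
    by blast
qed

lemma ker3_qf_eq_0:
  assumes "perm6 i j k l m n" "in_ker i x" "in_ker j x" "in_ker k x"
  shows "qf x = 0"
proof -
  obtain y z where "nonzero y" "nonzero z"
    and vanish: "\<And>x t. in_ker i x \<Longrightarrow> in_ker j x \<Longrightarrow> in_ker k x \<Longrightarrow>
      contract23 x y t = 0 \<and> contract13 x z t = 0"
    using contractions_vanish_on_ker3[OF assms(1)] by blast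
  show ?thesis
    by (rule qf_eq_0_if_contract23_vanishes[OF \<open>nonzero y\<close>]) (use vanish assms(2-4) in blast)
qed

lemma ker3_parallel:
  assumes p: "perm6 i j k l m n" and "nonzero x"
    and "in_ker i x" "in_ker j x" "in_ker k x" "in_ker i x'" "in_ker j x'" "in_ker k x'"
  shows "parallel x x'"
proof -
  obtain y z where yz: "nonzero y" "nonzero z"
    and vanish: "\<And>x t. in_ker i x \<Longrightarrow> in_ker j x \<Longrightarrow> in_ker k x \<Longrightarrow>
      contract23 x y t = 0 \<and> contract13 x z t = 0"
    using contractions_vanish_on_ker3[OF p] by blast
  show ?thesis
    by (rule parallel_if_contractions_vanish[OF yz \<open>nonzero x\<close>]) (use vanish assms(3-8) in blast)+
qed

lemma ker5_trivial:
  assumes p: "perm6 i j k l m n" and "in_ker i x" "in_ker j x" "in_ker k x" "in_ker l x" "in_ker m x"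
  shows "\<not> nonzero x"
proof (rule contract23_vanishes_on_hyperplane)
  fix y t assume "dot (b n) y = 0"
  then have term_vanishes: "dot (c \<rho>) x = 0 \<or> dot (b \<rho>) y = 0" if "\<rho> < 6" for \<rho>
    using perm6_cases[OF p that] assms(2-6) by (auto simp: in_ker_def)
  show "contract23 x y t = 0"
    unfolding contract23_eq_sum by (intro sum.neutral ballI) (use term_vanishes in auto)
qed

lemma ker2_not_indep3:
  assumes p: "perm6 i j k l m n"
    and "in_ker i v1" "in_ker j v1" "in_ker i v2" "in_ker j v2" "in_ker i v3" "in_ker j v3"
  shows "\<not> indep3 v1 v2 v3"
proof
  assume "indep3 v1 v2 v3"
  then obtain w1 w2 where w: "nonzero w1" "\<not> parallel w1 w2" "in_ker k w1" "in_ker k w2"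
    and span: "in_span3 v1 v2 v3 w1" "in_span3 v1 v2 v3 w2"
    unfolding in_ker_def by (rule indep3_hyperplane_section)
  have "in_ker i w1" "in_ker j w1" "in_ker i w2" "in_ker j w2"
    using span assms(2-7) by (auto intro: in_ker_span3)
  then show False
    using ker3_parallel[OF p w(1)] w by blast
qed

text \<open>The three kernels are isotropic lines in the plane \<open>ker c\<^sub>i \<inter> ker c\<^sub>j\<close>, and a plane
  containing three distinct isotropic lines is totally isotropic.\<close>

lemma ker2_lines_coincide:
  assumes p: "perm6 i j k l m n" and nonisotropic: "\<not> isotropic_pair i j"
    and x: "nonzero x" "in_ker i x" "in_ker j x" "in_ker k x"
    and x': "nonzero x'" "in_ker i x'" "in_ker j x'" "in_ker l x'"
    and x'': "nonzero x''" "in_ker i x''" "in_ker j x''" "in_ker m x''"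
  shows "parallel x x' \<or> parallel x x'' \<or> parallel x' x''"
proof (rule ccontr)
  assume np: "\<not> (parallel x x' \<or> parallel x x'' \<or> parallel x' x'')"
  have "\<not> indep3 x'' x x'"
    by (rule ker2_not_indep3[OF p]) (use x x' x'' in auto)
  then obtain \<alpha> \<beta> where comb: "\<And>t. x'' t = \<alpha> * x t + \<beta> * x' t"
    using in_span2_if_dependent x(1) np by blast
  have coeffs: "\<alpha> \<noteq> 0" "\<beta> \<noteq> 0"
    using lincomb_coeffs_nonzero_if_nonparallel[where z = x'' and x = x and y = x', OF comb] np
    by blast+
  have q: "qf x = 0" "qf x' = 0" "qf x'' = 0"
    using ker3_qf_eq_0[of i j k l m n x] ker3_qf_eq_0[of i j l k m n x']
      ker3_qf_eq_0[of i j m k l n x''] p x x' x''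
    by (simp_all add: perm6_def insert_commute)
  have "polar x x' = 0"
    by (rule polar_eq_0_if_isotropic_lincomb[OF comb q(1-3) coeffs])
  have "isotropic_pair i j"
    unfolding isotropic_pair_def
  proof (intro allI impI)
    fix v w assume "in_ker i v" "in_ker j v" "in_ker i w" "in_ker j w"
    then have "\<not> indep3 v x x'" "\<not> indep3 w x x'"
      using ker2_not_indep3[OF p] x x' by blast+
    obtain s s' where "\<And>t. v t = s * x t + s' * x' t"
      using in_span2_if_dependent[OF \<open>\<not> indep3 v x x'\<close> x(1)] np by blast
    moreover obtain u u' where "\<And>t. w t = u * x t + u' * x' t"
      using in_span2_if_dependent[OF \<open>\<not> indep3 w x x'\<close> x(1)] np by blast
    ultimately show "polar v w = 0"
      by (rule polar_eq_0_on_isotropic_span[OF q(1,2) \<open>polar x x' = 0\<close>])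
  qed
  with nonisotropic show False by contradiction
qed

lemma ker4_nonzero_if_isotropic:
  assumes "isotropic_pair i j" "isotropic_pair i k" "isotropic_pair i l"
  obtains q where "nonzero q" "in_ker i q" "in_ker j q" "in_ker k q" "in_ker l q"
proof -
  obtain A where A: "nonzero A" "in_ker i A" "in_ker j A" "in_ker k A" using ker3_nonzero .
  obtain B where B: "nonzero B" "in_ker i B" "in_ker j B" "in_ker l B" using ker3_nonzero .
  obtain C where C: "nonzero C" "in_ker i C" "in_ker k C" "in_ker l C" using ker3_nonzero .
  have "\<not> indep3 A B C"
  proof
    assume ind: "indep3 A B C"
    have AB: "polar A A = 0" "polar B B = 0" "polar A B = 0"
      using assms(1) A B unfolding isotropic_pair_def by blast+
    have AC: "polar C C = 0" "polar A C = 0"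
      using assms(2) A C unfolding isotropic_pair_def by blast+
    have BC: "polar B C = 0"
      using assms(3) B C unfolding isotropic_pair_def by blast
    show False
      by (rule no_isotropic_indep3[OF ind AB(1,2) AC(1) AB(3) AC(2) BC])
  qed
  then obtain \<alpha> \<beta> \<gamma> where comb: "\<forall>t. \<alpha> * A t + \<beta> * B t + \<gamma> * C t = 0"
    and nontrivial: "\<not> (\<alpha> = 0 \<and> \<beta> = 0 \<and> \<gamma> = 0)"
    unfolding indep3_def by blast
  show ?thesis
  proof (cases "\<gamma> = 0")
    case False
    have "dot (c j) (\<lambda>t. \<alpha> * A t + \<beta> * B t + \<gamma> * C t) = 0"
      using comb by (simp add: dot_def sum4_def)
    then have "in_ker j C"
      using A B False unfolding dot_lincomb3 by (simp add: in_ker_def)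
    then show ?thesis using that C by blast
  next
    case True
    then have AB: "\<forall>t. \<alpha> * A t + \<beta> * B t = 0" using comb by simp
    have "\<beta> \<noteq> 0"
    proof
      assume "\<beta> = 0"
      with AB have "\<forall>t. \<alpha> * A t = 0" by simp
      then have "\<alpha> = 0" using scale_eq_0_nonzero A(1) by blast
      with \<open>\<beta> = 0\<close> True nontrivial show False by simp
    qed
    then have "in_ker k B"
      using in_ker_parallel parallel_of_lincomb[OF AB] A by blast
    then show ?thesis using that B by blast
  qed
qed

lemma not_four_isotropic_pairs:
  assumes p: "perm6 i j k l m n"
    and "isotropic_pair i j" "isotropic_pair i k" "isotropic_pair i l" "isotropic_pair i m"
  shows False
proof -
  obtain q1 where q1: "nonzero q1" "in_ker i q1" "in_ker j q1" "in_ker k q1" "in_ker l q1"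
    using ker4_nonzero_if_isotropic[OF assms(2-4)] .
  obtain q2 where q2: "nonzero q2" "in_ker i q2" "in_ker j q2" "in_ker k q2" "in_ker m q2"
    using ker4_nonzero_if_isotropic[OF assms(2,3,5)] .
  have "in_ker m q1"
    using ker3_parallel[OF p q1(1-4) q2(2-4)] in_ker_parallel_rev q2 by blast
  then show False
    using ker5_trivial[OF p q1(2-5)] q1(1) by blast
qed

lemma isotropic_pair_if_complementary_ker4:
  assumes p: "perm6 i j k l m n"
    and s1: "nonzero s1" "in_ker i s1" "in_ker j s1" "in_ker k s1" "in_ker l s1"
    and s2: "nonzero s2" "in_ker i s2" "in_ker j s2" "in_ker m s2" "in_ker n s2"
  shows "isotropic_pair i k"
proof (rule ccontr)
  assume nonisotropic: "\<not> isotropic_pair i k"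
  obtain P1 where P1: "nonzero P1" "in_ker i P1" "in_ker k P1" "in_ker m P1" using ker3_nonzero .
  obtain P2 where P2: "nonzero P2" "in_ker i P2" "in_ker k P2" "in_ker n P2" using ker3_nonzero .
  have p': "perm6 i k j m n l" "perm6 i j k l n m" "perm6 i m n k j l" "perm6 i j k m n l"
    using p by (simp_all add: perm6_def insert_commute)
  have "parallel s1 P1 \<or> parallel s1 P2 \<or> parallel P1 P2"
    by (rule ker2_lines_coincide[OF p'(1) nonisotropic]) (use s1 P1 P2 in auto)
  then show False
  proof (elim disjE)
    assume "parallel s1 P1"
    then show False
      using in_ker_parallel_rev P1 ker5_trivial[OF p s1(2-5)] s1(1) by blast
  next
    assume "parallel s1 P2"
    then show False
      using in_ker_parallel_rev P2 ker5_trivial[OF p'(2) s1(2-5)] s1(1) by blast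
  next
    assume "parallel P1 P2"
    then have "in_ker n P1" using in_ker_parallel_rev P2 by blast
    then have "parallel s2 P1"
      using ker3_parallel[OF p'(3)] s2 P1 by blast
    then show False
      using in_ker_parallel_rev P1 ker5_trivial[OF p'(4) s2(2,3) _ s2(4,5)] s2(1) by blast
  qed
qed

lemma no_complementary_ker4:
  assumes p: "perm6 i j k l m n"
    and s1: "nonzero s1" "in_ker i s1" "in_ker j s1" "in_ker k s1" "in_ker l s1"
    and s2: "nonzero s2" "in_ker i s2" "in_ker j s2" "in_ker m s2" "in_ker n s2"
  shows False
proof -
  have p': "perm6 i j l k m n" "perm6 i j m n k l" "perm6 i j n m k l" "perm6 i k l m n j"
    using p by (simp_all add: perm6_def insert_commute)
  show False
    by (rule not_four_isotropic_pairs[OF p'(4)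
        isotropic_pair_if_complementary_ker4[OF p s1 s2]
        isotropic_pair_if_complementary_ker4[OF p'(1) s1(1-3,5,4) s2]
        isotropic_pair_if_complementary_ker4[OF p'(2) s2 s1]
        isotropic_pair_if_complementary_ker4[OF p'(3) s2(1-3,5,4) s1]])
qed

lemma ker4_trivial_if_nonisotropic:
  assumes p: "perm6 i j k l m n" and nonisotropic: "\<not> isotropic_pair i j"
    and x: "nonzero x" "in_ker i x" "in_ker j x" "in_ker k x" "in_ker l x"
  shows False
proof -
  obtain xm where xm: "nonzero xm" "in_ker i xm" "in_ker j xm" "in_ker m xm" using ker3_nonzero .
  obtain xn where xn: "nonzero xn" "in_ker i xn" "in_ker j xn" "in_ker n xn" using ker3_nonzero .
  have p': "perm6 i j k m n l" "perm6 i j k l n m"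
    using p by (simp_all add: perm6_def insert_commute)
  have "parallel x xm \<or> parallel x xn \<or> parallel xm xn"
    by (rule ker2_lines_coincide[OF p'(1) nonisotropic]) (use x xm xn in auto)
  then show False
  proof (elim disjE)
    assume "parallel x xm"
    then show False
      using in_ker_parallel_rev xm ker5_trivial[OF p x(2-5)] x(1) by blast
  next
    assume "parallel x xn"
    then show False
      using in_ker_parallel_rev xn ker5_trivial[OF p'(2) x(2-5)] x(1) by blast
  next
    assume "parallel xm xn"
    then have "in_ker n xm" using in_ker_parallel_rev xn by blast
    then show False
      using no_complementary_ker4[OF p x] xm by blast
  qed
qed

lemma isotropic_pair:
  assumes p: "perm6 i j k l m n"
  shows "isotropic_pair i j"
proof (rule ccontr)
  assume nonisotropic: "\<not> isotropic_pair i j"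
  obtain xk where xk: "nonzero xk" "in_ker i xk" "in_ker j xk" "in_ker k xk" using ker3_nonzero .
  obtain xl where xl: "nonzero xl" "in_ker i xl" "in_ker j xl" "in_ker l xl" using ker3_nonzero .
  obtain xm where xm: "nonzero xm" "in_ker i xm" "in_ker j xm" "in_ker m xm" using ker3_nonzero .
  have p': "perm6 i j k m l n" "perm6 i j l m k n"
    using p by (simp_all add: perm6_def insert_commute)
  have "parallel xk xl \<or> parallel xk xm \<or> parallel xl xm"
    by (rule ker2_lines_coincide[OF p nonisotropic]) (use xk xl xm in auto)
  then show False
  proof (elim disjE)
    assume "parallel xk xl"
    then show False
      using in_ker_parallel_rev xl ker4_trivial_if_nonisotropic[OF p nonisotropic xk] by blast
  next
    assume "parallel xk xm"
    then show False
      using in_ker_parallel_rev xm ker4_trivial_if_nonisotropic[OF p'(1) nonisotropic xk] by blast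
  next
    assume "parallel xl xm"
    then show False
      using in_ker_parallel_rev xm ker4_trivial_if_nonisotropic[OF p'(2) nonisotropic xl] by blast
  qed
qed

theorem impossible: False
proof -
  have p: "perm6 0 1 2 3 4 5" "perm6 0 2 1 3 4 5" "perm6 0 3 1 2 4 5" "perm6 0 4 1 2 3 5"
    by (auto simp: perm6_def)
  show False
    by (rule not_four_isotropic_pairs[OF p(1) isotropic_pair[OF p(1)] isotropic_pair[OF p(2)]
          isotropic_pair[OF p(3)] isotropic_pair[OF p(4)]])
qed

end

lemma kron_index:
  "i < dim_row A * dim_row B \<Longrightarrow> j < dim_col A * dim_col B \<Longrightarrow>
   kron A B $$ (i, j) = A $$ (i div dim_row B, j div dim_col B) * B $$ (i mod dim_row B, j mod dim_col B)"
  unfolding kron_def by simp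

lemma kron_dims [simp]:
  "dim_row (kron A B) = dim_row A * dim_row B" "dim_col (kron A B) = dim_col A * dim_col B"
  unfolding kron_def by simp_all

lemma kron3_carrier:
  "A \<in> carrier_mat 2 2 \<Longrightarrow> B \<in> carrier_mat 2 2 \<Longrightarrow> C \<in> carrier_mat 2 2 \<Longrightarrow> kron3 A B C \<in> carrier_mat 8 8"
  by (rule carrier_matI) (auto simp: kron3_def)

lemma kron3_index:
  assumes "A \<in> carrier_mat 2 2" "B \<in> carrier_mat 2 2" "C \<in> carrier_mat 2 2" "i < 8" "j < 8"
  shows "kron3 A B C $$ (i, j)
    = A $$ (i div 4, j div 4) * B $$ (i div 2 mod 2, j div 2 mod 2) * C $$ (i mod 2, j mod 2)"
proof -
  have "kron3 A B C $$ (i, j) = kron A B $$ (i div 2, j div 2) * C $$ (i mod 2, j mod 2)"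
    unfolding kron3_def using assms by (subst kron_index) (auto simp: kron_def)
  also have "kron A B $$ (i div 2, j div 2) = A $$ (i div 4, j div 4) * B $$ (i div 2 mod 2, j div 2 mod 2)"
    using assms by (subst kron_index) (auto simp: div_mult2_eq[symmetric])
  finally show ?thesis .
qed

lemma less2: "(i::nat) < 2 \<longleftrightarrow> i = 0 \<or> i = 1"
  by auto

lemma less8: "(i::nat) < 8 \<longleftrightarrow> i = 0 \<or> i = 1 \<or> i = 2 \<or> i = 3 \<or> i = 4 \<or> i = 5 \<or> i = 6 \<or> i = 7"
  by (simp add: eval_nat_numeral less_Suc_eq)

lemma S_carrier: "S0 \<in> carrier_mat 2 2" "S1 \<in> carrier_mat 2 2" "S2 \<in> carrier_mat 2 2" "S3 \<in> carrier_mat 2 2"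
  unfolding S0_def S1_def S2_def S3_def mat_of_rows_list_def by (rule carrier_matI; simp)+

lemma S_index:
  "i < 2 \<Longrightarrow> j < 2 \<Longrightarrow> S0 $$ (i, j) = (if i = 0 \<and> j = 0 then 1 else 0)"
  "i < 2 \<Longrightarrow> j < 2 \<Longrightarrow> S1 $$ (i, j) = (if i = 0 \<and> j = 1 then 1 else 0)"
  "i < 2 \<Longrightarrow> j < 2 \<Longrightarrow> S2 $$ (i, j) = (if i = 1 \<and> j = 0 then 1 else 0)"
  "i < 2 \<Longrightarrow> j < 2 \<Longrightarrow> S3 $$ (i, j) = (if i = 1 \<and> j = 1 then 1 else 0)"
  unfolding S0_def S1_def S2_def S3_def mat_of_rows_list_def by (auto simp: less2)

section \<open>\<open>U\<^sub>7\<close> is a permutation matrix\<close>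

definition perm_mat :: "nat \<Rightarrow> (nat \<Rightarrow> nat) \<Rightarrow> complex mat" where
  "perm_mat n f = mat n n (\<lambda>(i, j). if j = f i then 1 else 0)"

lemma unitary_perm_mat:
  assumes f: "bij_betw f {..<n} {..<n}"
  shows "unitary_mat (perm_mat n f)"
proof -
  let ?P = "perm_mat n f"
  let ?\<delta> = "\<lambda>a b. if a = b then 1 else 0 :: complex"
  have f_less: "f i < n" if "i < n" for i
    using f that by (auto simp: bij_betw_def)
  have carrier: "?P \<in> carrier_mat n n" "adj ?P \<in> carrier_mat n n"
    by (simp_all add: perm_mat_def adj_def)
  have P_index: "?P $$ (i, k) = ?\<delta> k (f i)" if "i < n" "k < n" for i k
    using that by (simp add: perm_mat_def)
  have adj_index: "adj ?P $$ (k, j) = ?\<delta> k (f j)" if "k < n" "j < n" for k j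
    using that by (simp add: adj_def perm_mat_def)
  have mult_index: "(A * B) $$ (i, j) = (\<Sum>k<n. A $$ (i, k) * B $$ (k, j))"
    if "A \<in> carrier_mat n n" "B \<in> carrier_mat n n" "i < n" "j < n" for A B i j
    using that by (simp add: scalar_prod_def atLeast0LessThan)
  have "?P * adj ?P = 1\<^sub>m n"
  proof (rule eq_matI)
    fix i j assume "i < dim_row (1\<^sub>m n :: complex mat)" "j < dim_col (1\<^sub>m n :: complex mat)"
    then have ij: "i < n" "j < n" by auto
    have "(?P * adj ?P) $$ (i, j) = (\<Sum>k<n. if k = f i then ?\<delta> (f i) (f j) else 0)"
      unfolding mult_index[OF carrier ij] by (rule sum.cong) (auto simp: P_index adj_index ij)
    also have "\<dots> = ?\<delta> (f i) (f j)"
      using f_less[OF ij(1)] by simp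
    also have "\<dots> = 1\<^sub>m n $$ (i, j)"
      using ij f by (auto simp: bij_betw_def inj_on_def)
    finally show "(?P * adj ?P) $$ (i, j) = 1\<^sub>m n $$ (i, j)" .
  qed (use carrier in auto)
  moreover have "adj ?P * ?P = 1\<^sub>m n"
  proof (rule eq_matI)
    fix i j assume "i < dim_row (1\<^sub>m n :: complex mat)" "j < dim_col (1\<^sub>m n :: complex mat)"
    then have ij: "i < n" "j < n" by auto
    have "(adj ?P * ?P) $$ (i, j) = (\<Sum>k<n. (\<lambda>m. ?\<delta> i m * ?\<delta> j m) (f k))"
      unfolding mult_index[OF carrier(2,1) ij] by (rule sum.cong) (auto simp: P_index adj_index ij)
    also have "\<dots> = (\<Sum>m<n. ?\<delta> i m * ?\<delta> j m)"
      using sum.reindex_bij_betw[OF f] .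
    also have "\<dots> = (\<Sum>m<n. if m = i then ?\<delta> i j else 0)"
      by (rule sum.cong) auto
    also have "\<dots> = 1\<^sub>m n $$ (i, j)"
      using ij by simp
    finally show "(adj ?P * ?P) $$ (i, j) = 1\<^sub>m n $$ (i, j)" .
  qed (use carrier in auto)
  ultimately show ?thesis
    using carrier by (simp add: unitary_mat_def)
qed

definition sigma7 :: "nat \<Rightarrow> nat" where
  "sigma7 i = [1, 6, 4, 3, 7, 0, 2, 5] ! i"

lemma bij_sigma7: "bij_betw sigma7 {..<8} {..<8}"
  by (rule bij_betw_byWitness[where f' = "\<lambda>j. [5, 0, 6, 3, 2, 7, 1, 4] ! j"])
    (auto simp: sigma7_def lessThan_def less8)

lemma kron3_as_mat:
  assumes "A \<in> carrier_mat 2 2" "B \<in> carrier_mat 2 2" "C \<in> carrier_mat 2 2"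
  shows "kron3 A B C = mat 8 8 (\<lambda>(i, j).
    A $$ (i div 4, j div 4) * B $$ (i div 2 mod 2, j div 2 mod 2) * C $$ (i mod 2, j mod 2))"
  by (rule eq_matI) (use assms kron3_carrier[OF assms] in \<open>simp_all add: kron3_index\<close>)

lemma add_mat_mat: "mat n m f + mat n m g = mat n m (\<lambda>x. f x + g x)"
  by (rule eq_matI) auto

lemma U7_index:
  assumes "i < 8" "j < 8"
  shows "U7 $$ (i, j) = (if j = sigma7 i then 1 else 0)"
  unfolding U7_def
  by (simp only: kron3_as_mat S_carrier add_mat_mat index_mat assms case_prod_conv)
    (use assms in \<open>simp only: less8; elim disjE; simp add: S_index sigma7_def\<close>)

lemma U7_carrier: "U7 \<in> carrier_mat 8 8"
  by (simp add: U7_def kron3_carrier S_carrier)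

lemma U7_perm_mat: "U7 = perm_mat 8 sigma7"
  by (rule eq_matI) (use U7_carrier in \<open>auto simp: perm_mat_def U7_index\<close>)

lemma U7_unitary: "unitary_mat U7"
  unfolding U7_perm_mat using bij_sigma7 by (rule unitary_perm_mat)

lemma foldr_add_mat:
  assumes "\<forall>\<rho>\<in>set xs. F \<rho> \<in> carrier_mat n m"
  shows "foldr (\<lambda>j acc. F j + acc) xs (0\<^sub>m n m) \<in> carrier_mat n m \<and>
    (\<forall>i<n. \<forall>j<m. foldr (\<lambda>j acc. F j + acc) xs (0\<^sub>m n m) $$ (i, j) = (\<Sum>\<rho>\<leftarrow>xs. F \<rho> $$ (i, j)))"
  using assms by (induction xs) auto

lemma msum_carrier: "\<forall>\<rho><r. F \<rho> \<in> carrier_mat n m \<Longrightarrow> msum n m F r \<in> carrier_mat n m"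
  using foldr_add_mat[of "[0..<r]" F n m] by (simp add: msum_def)

lemma msum_index:
  assumes "\<forall>\<rho><r. F \<rho> \<in> carrier_mat n m" "i < n" "j < m"
  shows "msum n m F r $$ (i, j) = (\<Sum>\<rho><r. F \<rho> $$ (i, j))"
  using foldr_add_mat[of "[0..<r]" F n m] assms
  by (simp add: msum_def sum_list_sum_nth atLeast0LessThan)

definition mat2 :: "complex list \<Rightarrow> complex mat" where
  "mat2 v = mat_of_rows_list 2 [[v ! 0, v ! 1], [v ! 2, v ! 3]]"

lemma mat2_carrier: "mat2 v \<in> carrier_mat 2 2"
  unfolding mat2_def mat_of_rows_list_def by (rule carrier_matI) simp_all

lemma mat2_index: "i < 2 \<Longrightarrow> j < 2 \<Longrightarrow> mat2 v $$ (i, j) = v ! (2 * i + j)"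
  unfolding mat2_def mat_of_rows_list_def by (auto simp: less2)

lemma sr_decomp_U7_7: "is_sr_decomp U7 7"
proof -
  define As :: "complex list list" where
    "As = [[1,1,0,0], [0,1,1,0], [1,0,0,0], [0,1,0,0], [1,0,0,1], [-1,0,1,0], [0,-1,0,1]]"
  define Bs :: "complex list list" where
    "Bs = [[1,0,1,0], [1,0,0,0], [0,0,-1,1], [-1,1,0,0], [0,0,1,0], [1,0,0,1], [0,1,1,0]]"
  define Cs :: "complex list list" where
    "Cs = [[1,1,0,0], [-1,0,1,0], [1,0,0,1], [0,1,1,0], [0,-1,0,1], [1,0,0,0], [0,1,0,0]]"
  let ?F = "\<lambda>\<rho>. kron3 (mat2 (As ! \<rho>)) (mat2 (Bs ! \<rho>)) (mat2 (Cs ! \<rho>))"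
  have F_carrier: "\<forall>\<rho><7. ?F \<rho> \<in> carrier_mat 8 8"
    by (simp add: kron3_carrier mat2_carrier)
  have "U7 = msum 8 8 ?F 7"
  proof (rule eq_matI)
    fix i j assume "i < dim_row (msum 8 8 ?F 7)" "j < dim_col (msum 8 8 ?F 7)"
    then have ij: "i < 8" "j < 8"
      using msum_carrier[OF F_carrier] by auto
    have "i div 4 < 2" "j div 4 < 2" "i div 2 mod 2 < 2" "j div 2 mod 2 < 2" "i mod 2 < 2" "j mod 2 < 2"
      using ij by auto
    then have "?F \<rho> $$ (i, j) = As ! \<rho> ! (2 * (i div 4) + j div 4)
        * Bs ! \<rho> ! (2 * (i div 2 mod 2) + j div 2 mod 2) * Cs ! \<rho> ! (2 * (i mod 2) + j mod 2)" for \<rho>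
      using ij by (simp add: kron3_index mat2_carrier mat2_index)
    then have "msum 8 8 ?F 7 $$ (i, j) = (\<Sum>\<rho><7.
        As ! \<rho> ! (2 * (i div 4) + j div 4) * Bs ! \<rho> ! (2 * (i div 2 mod 2) + j div 2 mod 2)
        * Cs ! \<rho> ! (2 * (i mod 2) + j mod 2))"
      using msum_index[OF F_carrier ij] by simp
    also have "\<dots> = U7 $$ (i, j)"
    proof -
      have "(\<Sum>\<rho><7::nat. g \<rho>) = g 0 + g 1 + g 2 + g 3 + g 4 + g 5 + (g 6 :: complex)" for g
        by (simp add: eval_nat_numeral)
      then show ?thesis
        using ij by (simp only:) (simp only: less8; elim disjE; simp add: U7_index sigma7_def As_def Bs_def Cs_def)
    qed
    finally show "U7 $$ (i, j) = msum 8 8 ?F 7 $$ (i, j)" by simp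
  qed (use msum_carrier[OF F_carrier] U7_carrier in auto)
  then show ?thesis
    unfolding is_sr_decomp_def by (intro exI[of _ "\<lambda>\<rho>. mat2 (As ! \<rho>)"] exI[of _ "\<lambda>\<rho>. mat2 (Bs ! \<rho>)"]
        exI[of _ "\<lambda>\<rho>. mat2 (Cs ! \<rho>)"]) (auto simp: mat2_carrier)
qed

text \<open>Decompositions with fewer than six terms are padded with zero terms.\<close>

lemma rank6_decomposition_if_sr_decomp:
  assumes "is_sr_decomp U7 r" "r \<le> 6"
  shows "\<exists>a b c. rank6_decomposition a b c"
proof -
  obtain A B C where car: "\<forall>\<rho><r. A \<rho> \<in> carrier_mat 2 2 \<and> B \<rho> \<in> carrier_mat 2 2 \<and> C \<rho> \<in> carrier_mat 2 2"
    and U: "U7 = msum 8 8 (\<lambda>\<rho>. kron3 (A \<rho>) (B \<rho>) (C \<rho>)) r"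
    using assms(1) unfolding is_sr_decomp_def by blast
  have kron_carrier: "\<forall>\<rho><r. kron3 (A \<rho>) (B \<rho>) (C \<rho>) \<in> carrier_mat 8 8"
    using car kron3_carrier by blast
  define coord :: "complex mat \<Rightarrow> idx4 \<Rightarrow> complex"
    where "coord X t = X $$ (nat_of_idx4 t div 2, nat_of_idx4 t mod 2)" for X t
  let ?pad = "\<lambda>X \<rho> t. if \<rho> < r then coord (X \<rho>) t else 0"
  have "rank6_decomposition (?pad A) (?pad B) (?pad C)"
  proof
    fix \<alpha> \<beta> \<gamma>
    define I where "I = 4 * (nat_of_idx4 \<alpha> div 2) + 2 * (nat_of_idx4 \<beta> div 2) + nat_of_idx4 \<gamma> div 2"
    define J where "J = 4 * (nat_of_idx4 \<alpha> mod 2) + 2 * (nat_of_idx4 \<beta> mod 2) + nat_of_idx4 \<gamma> mod 2"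
    have IJ: "I < 8" "J < 8" "I div 4 = nat_of_idx4 \<alpha> div 2" "J div 4 = nat_of_idx4 \<alpha> mod 2"
      "I div 2 mod 2 = nat_of_idx4 \<beta> div 2" "J div 2 mod 2 = nat_of_idx4 \<beta> mod 2"
      "I mod 2 = nat_of_idx4 \<gamma> div 2" "J mod 2 = nat_of_idx4 \<gamma> mod 2"
      unfolding I_def J_def by (cases \<alpha>; cases \<beta>; cases \<gamma>; simp add: nat_of_idx4_def)+
    have "U7_tensor \<alpha> \<beta> \<gamma> = U7 $$ (I, J)"
      unfolding I_def J_def
      by (cases \<alpha>; cases \<beta>; cases \<gamma>; simp add: nat_of_idx4_def U7_index sigma7_def U7_tensor_def)
    also have "\<dots> = (\<Sum>\<rho><r. kron3 (A \<rho>) (B \<rho>) (C \<rho>) $$ (I, J))"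
      using msum_index[OF kron_carrier IJ(1,2)] U by simp
    also have "\<dots> = (\<Sum>\<rho><r. coord (A \<rho>) \<alpha> * coord (B \<rho>) \<beta> * coord (C \<rho>) \<gamma>)"
      by (rule sum.cong) (use car IJ in \<open>auto simp: kron3_index coord_def\<close>)
    also have "\<dots> = (\<Sum>\<rho><6. if \<rho> < r then coord (A \<rho>) \<alpha> * coord (B \<rho>) \<beta> * coord (C \<rho>) \<gamma> else 0)"
    proof -
      have "{..<6} \<inter> {\<rho>. \<rho> < r} = {..<r}"
        using assms(2) by auto
      then show ?thesis by (simp add: sum.If_cases)
    qed
    also have "\<dots> = (\<Sum>\<rho><6. ?pad A \<rho> \<alpha> * ?pad B \<rho> \<beta> * ?pad C \<rho> \<gamma>)"
      by (rule sum.cong) auto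
    finally show "U7_tensor \<alpha> \<beta> \<gamma> = (\<Sum>\<rho><6. ?pad A \<rho> \<alpha> * ?pad B \<rho> \<beta> * ?pad C \<rho> \<gamma>)" .
  qed
  then show ?thesis by blast
qed

lemma sr_decomp_U7_ge_7:
  assumes "is_sr_decomp U7 r"
  shows "7 \<le> r"
proof (rule ccontr)
  assume "\<not> 7 \<le> r"
  then obtain a b c where "rank6_decomposition a b c"
    using rank6_decomposition_if_sr_decomp[OF assms] by auto
  then show False
    by (rule rank6_decomposition.impossible)
qed

theorem mainTheorem6:
  shows "U7 \<in> carrier_mat 8 8 \<and> unitary_mat U7 \<and> schmidt_rank U7 = 7"
proof -
  have "schmidt_rank U7 = 7"
    unfolding schmidt_rank_def
    by (rule Least_equality) (use sr_decomp_U7_7 sr_decomp_U7_ge_7 in auto)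
  then show ?thesis
    using U7_carrier U7_unitary by blast
qed

end
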